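(* Let $p\in(1,2)$ and let $u$ be an ancient solution of the half-space problem $u_t-\Delta u=|\nabla u|^p$ in $\mathbb{R}^n_+\times(-\infty,0)$, $u=0$ on $\partial\mathbb{R}^n_+\times(-\infty,0)$. Assume that for each $\varepsilon>0$, $$\inf_{\Gamma_R\times(-\infty,-\varepsilon]}u=o(R)\quad\text{as }R\to\infty.$$ Then $u\ge0$.
   Context: $\mathbb{R}^n_+:=\{x\in\mathbb{R}^n: x_n>0\}$, $\Gamma_R:=\{x\in\mathbb{R}^n: 0<x_n<R\}$. An ancient solution of the half-space problem is a function $u\in C^{2,1}(Q)\cap C(\overline Q)$, $Q=\mathbb{R}^n_+\times(-\infty,0)$, satisfying the PDE pointwise in $Q$ and $u=0$ pointwise on $\partial\mathbb{R}^n_+\times(-\infty,0)$. *)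

theory Defs
  imports "HOL-Analysis.Analysis"
begin

text \<open>Points of R^n are vectors x :: real^'n; the distinguished coordinate k plays the
role of x_n.  Q = R^n_+ x (-inf,0) with R^n_+ = {x. x$k > 0}.\<close>

definition halfQ :: "'n::finite \<Rightarrow> ((real^'n) \<times> real) set" where
  "halfQ k = {(x,t). x $ k > 0 \<and> t < 0}"

definition halfQ_closure :: "'n::finite \<Rightarrow> ((real^'n) \<times> real) set" where
  "halfQ_closure k = {(x,t). x $ k \<ge> 0 \<and> t \<le> 0}"

definition ancient_half_space_solution ::
  "real \<Rightarrow> 'n::finite \<Rightarrow> (real^'n \<Rightarrow> real \<Rightarrow> real) \<Rightarrow> bool" where
  "ancient_half_space_solution p k u \<longleftrightarrow>
     (\<exists>g :: real^'n \<Rightarrow> real \<Rightarrow> real^'n.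
      \<exists>H :: real^'n \<Rightarrow> real \<Rightarrow> real^'n^'n.
      \<exists>ut :: real^'n \<Rightarrow> real \<Rightarrow> real.
        (\<forall>(x,t)\<in>halfQ k.
            ((\<lambda>y. u y t) has_derivative (\<lambda>h. g x t \<bullet> h)) (at x) \<and>
            ((\<lambda>y. g y t) has_derivative (\<lambda>h. H x t *v h)) (at x) \<and>
            ((\<lambda>s. u x s) has_real_derivative ut x t) (at t)) \<and>
        continuous_on (halfQ k) (\<lambda>(x,t). g x t) \<and>
        continuous_on (halfQ k) (\<lambda>(x,t). H x t) \<and>
        continuous_on (halfQ k) (\<lambda>(x,t). ut x t) \<and>
        continuous_on (halfQ_closure k) (\<lambda>(x,t). u x t) \<and>
        (\<forall>(x,t)\<in>halfQ k.
            ut x t - (\<Sum>i\<in>UNIV. H x t $ i $ i) = norm (g x t) powr p) \<and>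
        (\<forall>x t. x $ k = 0 \<and> t < 0 \<longrightarrow> u x t = 0))"

text \<open>The set Gamma_R x (-inf,-eps] on which the infimum is taken.\<close>
definition strip_set :: "'n::finite \<Rightarrow> real \<Rightarrow> real \<Rightarrow> ((real^'n) \<times> real) set" where
  "strip_set k R \<epsilon> = {(x,t). 0 < x $ k \<and> x $ k < R \<and> t \<le> -\<epsilon>}"

end

theory Submission
  imports Defs
begin

(* Only the supersolution property u_t - \<Delta>u = |\<nabla>u|^p \<ge> 0 enters.
   Suppose u(x0,t0) = -\<delta> < 0.  The sublinear growth of the infimum yields a width R with
   -u \<le> M on the strip 0 < x_k \<le> R up to time t0, where M is small compared to R.  On the
   cylinder ({0 < x_k < R} \<inter> B(x0,L)) \<times> (T,t0] the function -u is a subsolution of the heat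
   equation which vanishes on x_k = 0, and it is dominated on the rest of the parabolic
   boundary by an explicit strict supersolution \<psi>.  The maximum principle gives -u \<le> \<psi>, and
   for T and L chosen far enough away, \<psi>(x0,t0) < \<delta>: a contradiction. *)

lemma second_derivative_nonpos_at_local_max:
  fixes f f' :: "real \<Rightarrow> real"
  assumes "d > 0"
    and f': "\<And>s. \<bar>s - a\<bar> < d \<Longrightarrow> (f has_real_derivative f' s) (at s)"
    and f'': "(f' has_real_derivative c) (at a)"
    and max: "\<And>s. \<bar>s - a\<bar> < d \<Longrightarrow> f s \<le> f a"
  shows "c \<le> 0"
proof (rule ccontr)
  assume "\<not> c \<le> 0"
  then obtain e where "e > 0" and f'_inc: "\<And>h. 0 < h \<Longrightarrow> h < e \<Longrightarrow> f' a < f' (a + h)"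
    using DERIV_pos_inc_right[OF f''] by force
  have "f' a = 0"
    using DERIV_local_max[OF f'[of a] \<open>d > 0\<close>] max \<open>d > 0\<close> by (simp add: dist_real_def)
  define h where "h = min d e / 2"
  have h: "0 < h" "h < d" "h < e"
    using \<open>d > 0\<close> \<open>e > 0\<close> by (auto simp: h_def)
  obtain z where z: "a < z" "z < a + h" "f (a + h) - f a = h * f' z"
    using MVT2[of a "a + h" f f'] f' h by force
  have "f' z > 0"
    using f'_inc[of "z - a"] \<open>f' a = 0\<close> z h by simp
  then have "f (a + h) > f a"
    using z h by (simp add: algebra_simps)
  with max[of "a + h"] h show False
    by simp
qed

lemma derivative_nonneg_at_left_max:
  fixes f :: "real \<Rightarrow> real"
  assumes f': "(f has_real_derivative c) (at a)" and "d > 0"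
    and max: "\<And>s. a - d < s \<Longrightarrow> s < a \<Longrightarrow> f s \<le> f a"
  shows "c \<ge> 0"
proof (rule ccontr)
  assume "\<not> c \<ge> 0"
  then obtain e where "e > 0" and dec: "\<And>h. 0 < h \<Longrightarrow> h < e \<Longrightarrow> f a < f (a - h)"
    using DERIV_neg_dec_left[OF f'] by force
  define h where "h = min d e / 2"
  have "0 < h" "h < d" "h < e"
    using \<open>d > 0\<close> \<open>e > 0\<close> by (auto simp: h_def)
  with dec[of h] max[of "a - h"] show False
    by simp
qed

lemma has_derivative_along_line:
  fixes F :: "'a::real_normed_vector \<Rightarrow> 'b::real_normed_vector"
  assumes "(F has_derivative F') (at (x + s *\<^sub>R e))"
  shows "((\<lambda>s. F (x + s *\<^sub>R e)) has_derivative (\<lambda>h. h *\<^sub>R F' e)) (at s)"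
proof -
  have "((\<lambda>s. x + s *\<^sub>R e) has_derivative (\<lambda>h. h *\<^sub>R e)) (at s)"
    by (auto intro!: derivative_eq_intros)
  from diff_chain_at[OF this assms] show ?thesis
    using linear_scale[OF has_derivative_linear[OF assms]] by (simp add: o_def)
qed

lemma has_real_derivative_partial:
  fixes F :: "real^'n \<Rightarrow> real"
  assumes "(F has_derivative (\<lambda>h. D \<bullet> h)) (at (x + s *\<^sub>R axis i 1))"
  shows "((\<lambda>s. F (x + s *\<^sub>R axis i 1)) has_real_derivative D $ i) (at s)"
  using has_derivative_along_line[OF assms]
  by (simp add: has_field_derivative_def inner_axis mult.commute[of _ "D $ i"])

lemma has_real_derivative_partial_component:
  fixes F :: "real^'n \<Rightarrow> real^'n"
  assumes "(F has_derivative (\<lambda>h. A *v h)) (at (x + s *\<^sub>R axis i 1))"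
  shows "((\<lambda>s. F (x + s *\<^sub>R axis i 1) $ i) has_real_derivative A $ i $ i) (at s)"
  using bounded_linear.has_derivative[OF bounded_linear_vec_nth[of i] has_derivative_along_line[OF assms]]
  by (simp add: has_field_derivative_def matrix_vector_mult_basis column_def mult.commute[of _ "A $ i $ i"])

definition parabolic_derivatives ::
  "(real^'n \<Rightarrow> real \<Rightarrow> real) \<Rightarrow> (real^'n \<Rightarrow> real \<Rightarrow> real^'n) \<Rightarrow> (real^'n \<Rightarrow> real \<Rightarrow> real^'n^'n)
    \<Rightarrow> (real^'n \<Rightarrow> real \<Rightarrow> real) \<Rightarrow> real^'n \<Rightarrow> real \<Rightarrow> bool" where
  "parabolic_derivatives w Dw D2w wt x t \<longleftrightarrow>
     ((\<lambda>y. w y t) has_derivative (\<lambda>h. Dw x t \<bullet> h)) (at x) \<and>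
     ((\<lambda>y. Dw y t) has_derivative (\<lambda>h. D2w x t *v h)) (at x) \<and>
     ((\<lambda>s. w x s) has_real_derivative wt x t) (at t)"

lemma parabolic_derivatives_minus:
  assumes "parabolic_derivatives w Dw D2w wt x t"
  shows "parabolic_derivatives (\<lambda>x t. - w x t) (\<lambda>x t. - Dw x t) (\<lambda>x t. - D2w x t) (\<lambda>x t. - wt x t) x t"
proof -
  note w = assms[unfolded parabolic_derivatives_def]
  have "((\<lambda>y. - w y t) has_derivative (\<lambda>h. (- Dw x t) \<bullet> h)) (at x)"
    by (rule has_derivative_eq_rhs[OF has_derivative_minus[OF w[THEN conjunct1]]]) simp
  moreover have "((\<lambda>y. - Dw y t) has_derivative (\<lambda>h. (- D2w x t) *v h)) (at x)"
    by (rule has_derivative_eq_rhs[OF has_derivative_minus[OF w[THEN conjunct2, THEN conjunct1]]])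
       (simp add: fun_eq_iff vec_eq_iff matrix_vector_mul_component)
  ultimately show ?thesis
    using DERIV_minus[OF w[THEN conjunct2, THEN conjunct2]] by (simp add: parabolic_derivatives_def)
qed

lemma parabolic_derivatives_diff:
  assumes "parabolic_derivatives v Dv D2v vt x t" "parabolic_derivatives w Dw D2w wt x t"
  shows "parabolic_derivatives (\<lambda>x t. v x t - w x t) (\<lambda>x t. Dv x t - Dw x t) (\<lambda>x t. D2v x t - D2w x t)
    (\<lambda>x t. vt x t - wt x t) x t"
proof -
  note v = assms(1)[unfolded parabolic_derivatives_def] and w = assms(2)[unfolded parabolic_derivatives_def]
  have "((\<lambda>y. v y t - w y t) has_derivative (\<lambda>h. (Dv x t - Dw x t) \<bullet> h)) (at x)"
    by (rule has_derivative_eq_rhs[OF has_derivative_diff[OF v[THEN conjunct1] w[THEN conjunct1]]])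
       (simp add: fun_eq_iff inner_diff_left)
  moreover have "((\<lambda>y. Dv y t - Dw y t) has_derivative (\<lambda>h. (D2v x t - D2w x t) *v h)) (at x)"
    by (rule has_derivative_eq_rhs[OF has_derivative_diff[OF v[THEN conjunct2, THEN conjunct1]
          w[THEN conjunct2, THEN conjunct1]]])
       (simp add: fun_eq_iff vec_eq_iff matrix_vector_mul_component inner_diff_left)
  ultimately show ?thesis
    using DERIV_diff[OF v[THEN conjunct2, THEN conjunct2] w[THEN conjunct2, THEN conjunct2]]
    by (simp add: parabolic_derivatives_def)
qed

lemma trace_le_time_derivative_at_parabolic_max:
  fixes F :: "real^'n::finite \<Rightarrow> real \<Rightarrow> real"
  assumes "d > 0"
    and deriv: "\<And>y. y \<in> ball x d \<Longrightarrow> parabolic_derivatives F DF D2F Ft y t"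
    and space_max: "\<And>y. y \<in> ball x d \<Longrightarrow> F y t \<le> F x t"
    and time_max: "\<And>s. t - d < s \<Longrightarrow> s < t \<Longrightarrow> F x s \<le> F x t"
  shows "(\<Sum>i\<in>UNIV. D2F x t $ i $ i) \<le> Ft x t"
proof -
  have "D2F x t $ i $ i \<le> 0" for i
  proof (rule second_derivative_nonpos_at_local_max
      [where f = "\<lambda>s. F (x + s *\<^sub>R axis i 1) t" and f' = "\<lambda>s. DF (x + s *\<^sub>R axis i 1) t $ i" and a = 0])
    fix s :: real assume "\<bar>s - 0\<bar> < d"
    then have "x + s *\<^sub>R axis i 1 \<in> ball x d"
      by (simp add: dist_norm)
    then show "((\<lambda>s. F (x + s *\<^sub>R axis i 1) t) has_real_derivative DF (x + s *\<^sub>R axis i 1) t $ i) (at s)"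
      and "F (x + s *\<^sub>R axis i 1) t \<le> F (x + 0 *\<^sub>R axis i 1) t"
      using deriv space_max by (auto intro: has_real_derivative_partial simp: parabolic_derivatives_def)
  next
    show "((\<lambda>s. DF (x + s *\<^sub>R axis i 1) t $ i) has_real_derivative D2F x t $ i $ i) (at 0)"
      using deriv[of x] \<open>d > 0\<close>
      by (intro has_real_derivative_partial_component) (simp add: parabolic_derivatives_def)
  qed fact
  then have "(\<Sum>i\<in>UNIV. D2F x t $ i $ i) \<le> 0"
    by (simp add: sum_nonpos)
  also have "0 \<le> Ft x t"
  proof (rule derivative_nonneg_at_left_max[where f = "\<lambda>s. F x s", OF _ \<open>d > 0\<close> time_max])
    show "((\<lambda>s. F x s) has_real_derivative Ft x t) (at t)"
      using deriv[of x] \<open>d > 0\<close> by (simp add: parabolic_derivatives_def)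
  qed
  finally show ?thesis .
qed

lemma parabolic_comparison_strict:
  fixes w :: "real^'n::finite \<Rightarrow> real \<Rightarrow> real" and \<Omega> :: "(real^'n) set"
  assumes "open \<Omega>" "bounded \<Omega>"
    and cont: "continuous_on (closure \<Omega> \<times> {T..t0}) (\<lambda>(x, t). w x t)"
    and lateral: "\<And>x t. x \<in> frontier \<Omega> \<Longrightarrow> T \<le> t \<Longrightarrow> t \<le> t0 \<Longrightarrow> w x t \<le> 0"
    and initial: "\<And>x. x \<in> closure \<Omega> \<Longrightarrow> w x T \<le> 0"
    and deriv: "\<And>x t. x \<in> \<Omega> \<Longrightarrow> T < t \<Longrightarrow> t \<le> t0 \<Longrightarrow> parabolic_derivatives w Dw D2w wt x t"
    and strict: "\<And>x t. x \<in> \<Omega> \<Longrightarrow> T < t \<Longrightarrow> t \<le> t0 \<Longrightarrow> wt x t < (\<Sum>i\<in>UNIV. D2w x t $ i $ i)"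
    and x: "x \<in> closure \<Omega>" "T \<le> t" "t \<le> t0"
  shows "w x t \<le> 0"
proof -
  define K where "K = closure \<Omega> \<times> {T..t0}"
  have "compact K"
    using \<open>bounded \<Omega>\<close> by (simp add: K_def compact_Times compact_closure)
  moreover have "(x, t) \<in> K"
    using x by (simp add: K_def)
  ultimately obtain x1 t1 where "(x1, t1) \<in> K" and max: "\<And>y s. (y, s) \<in> K \<Longrightarrow> w y s \<le> w x1 t1"
    using continuous_attains_sup[of K "\<lambda>(x, t). w x t"] cont by (force simp: K_def)
  have "w x1 t1 \<le> 0"
  proof (rule ccontr)
    assume "\<not> w x1 t1 \<le> 0"
    moreover have "x1 \<in> closure \<Omega>" "T \<le> t1" "t1 \<le> t0"
      using \<open>(x1, t1) \<in> K\<close> by (auto simp: K_def)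
    ultimately have "x1 \<in> \<Omega>" "T < t1"
      using lateral initial by (force simp: frontier_def interior_open[OF \<open>open \<Omega>\<close>])+
    obtain d0 where "d0 > 0" "ball x1 d0 \<subseteq> \<Omega>"
      using \<open>open \<Omega>\<close> \<open>x1 \<in> \<Omega>\<close> open_contains_ball by blast
    define d where "d = min d0 (t1 - T)"
    have "d > 0" "d \<le> t1 - T" "ball x1 d \<subseteq> \<Omega>"
      using \<open>d0 > 0\<close> \<open>T < t1\<close> \<open>ball x1 d0 \<subseteq> \<Omega>\<close> by (auto simp: d_def)
    have "(\<Sum>i\<in>UNIV. D2w x1 t1 $ i $ i) \<le> wt x1 t1"
    proof (rule trace_le_time_derivative_at_parabolic_max[where F = w and DF = Dw and D2F = D2w and Ft = wt, OF \<open>d > 0\<close>])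
      fix y assume "y \<in> ball x1 d"
      with \<open>ball x1 d \<subseteq> \<Omega>\<close> have "y \<in> \<Omega>"
        by blast
      then show "parabolic_derivatives w Dw D2w wt y t1"
        using deriv \<open>T < t1\<close> \<open>t1 \<le> t0\<close> by blast
      show "w y t1 \<le> w x1 t1"
        using \<open>y \<in> \<Omega>\<close> \<open>T < t1\<close> \<open>t1 \<le> t0\<close> closure_subset by (intro max) (auto simp: K_def)
    next
      fix s assume "t1 - d < s" "s < t1"
      then show "w x1 s \<le> w x1 t1"
        using \<open>x1 \<in> closure \<Omega>\<close> \<open>d \<le> t1 - T\<close> \<open>t1 \<le> t0\<close> by (intro max) (simp add: K_def)
    qed
    with strict[OF \<open>x1 \<in> \<Omega>\<close> \<open>T < t1\<close> \<open>t1 \<le> t0\<close>] show False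
      by linarith
  qed
  with max \<open>(x, t) \<in> K\<close> show ?thesis
    by (meson order_trans)
qed

lemma heat_comparison:
  fixes v \<psi> :: "real^'n::finite \<Rightarrow> real \<Rightarrow> real" and \<Omega> :: "(real^'n) set"
  assumes "open \<Omega>" "bounded \<Omega>"
    and "continuous_on (closure \<Omega> \<times> {T..t0}) (\<lambda>(x, t). v x t)"
    and "continuous_on (closure \<Omega> \<times> {T..t0}) (\<lambda>(x, t). \<psi> x t)"
    and lateral: "\<And>x t. x \<in> frontier \<Omega> \<Longrightarrow> T \<le> t \<Longrightarrow> t \<le> t0 \<Longrightarrow> v x t \<le> \<psi> x t"
    and initial: "\<And>x. x \<in> closure \<Omega> \<Longrightarrow> v x T \<le> \<psi> x T"
    and sub: "\<And>x t. x \<in> \<Omega> \<Longrightarrow> T < t \<Longrightarrow> t \<le> t0 \<Longrightarrow>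
        parabolic_derivatives v Dv D2v vt x t \<and> vt x t \<le> (\<Sum>i\<in>UNIV. D2v x t $ i $ i)"
    and super: "\<And>x t. x \<in> \<Omega> \<Longrightarrow> T < t \<Longrightarrow> t \<le> t0 \<Longrightarrow>
        parabolic_derivatives \<psi> D\<psi> D2\<psi> \<psi>t x t \<and> (\<Sum>i\<in>UNIV. D2\<psi> x t $ i $ i) < \<psi>t x t"
    and "x \<in> closure \<Omega>" "T \<le> t" "t \<le> t0"
  shows "v x t \<le> \<psi> x t"
proof -
  have "v x t - \<psi> x t \<le> 0"
  proof (rule parabolic_comparison_strict[where w = "\<lambda>x t. v x t - \<psi> x t" and \<Omega> = \<Omega>
        and Dw = "\<lambda>x t. Dv x t - D\<psi> x t" and D2w = "\<lambda>x t. D2v x t - D2\<psi> x t"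
        and wt = "\<lambda>x t. vt x t - \<psi>t x t"])
    show "continuous_on (closure \<Omega> \<times> {T..t0}) (\<lambda>(x, t). v x t - \<psi> x t)"
      using assms(3,4) unfolding case_prod_unfold by (intro continuous_intros)
  next
    fix x t assume "x \<in> \<Omega>" "T < t" "t \<le> t0"
    show "parabolic_derivatives (\<lambda>x t. v x t - \<psi> x t) (\<lambda>x t. Dv x t - D\<psi> x t)
        (\<lambda>x t. D2v x t - D2\<psi> x t) (\<lambda>x t. vt x t - \<psi>t x t) x t"
      using sub[OF \<open>x \<in> \<Omega>\<close> \<open>T < t\<close> \<open>t \<le> t0\<close>] super[OF \<open>x \<in> \<Omega>\<close> \<open>T < t\<close> \<open>t \<le> t0\<close>]
      by (blast intro: parabolic_derivatives_diff)
    have "(\<Sum>i\<in>UNIV. (D2v x t - D2\<psi> x t) $ i $ i) = (\<Sum>i\<in>UNIV. D2v x t $ i $ i) - (\<Sum>i\<in>UNIV. D2\<psi> x t $ i $ i)"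
      by (simp add: sum_subtractf)
    with sub[OF \<open>x \<in> \<Omega>\<close> \<open>T < t\<close> \<open>t \<le> t0\<close>] super[OF \<open>x \<in> \<Omega>\<close> \<open>T < t\<close> \<open>t \<le> t0\<close>]
    show "vt x t - \<psi>t x t < (\<Sum>i\<in>UNIV. (D2v x t - D2\<psi> x t) $ i $ i)"
      by linarith
  next
    fix x t assume "x \<in> frontier \<Omega>" "T \<le> t" "t \<le> t0"
    with lateral show "v x t - \<psi> x t \<le> 0"
      by simp
  next
    fix x assume "x \<in> closure \<Omega>"
    with initial show "v x T - \<psi> x T \<le> 0"
      by simp
  qed fact+
  then show ?thesis
    by simp
qed

lemma strip_ball:
  fixes x0 :: "real^'n::finite" and k :: 'n and R L :: real
  defines "S \<equiv> {x. x$k > 0} \<inter> {x. x$k < R} \<inter> ball x0 L"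
  shows open_strip_ball: "open S" and bounded_strip_ball: "bounded S"
    and closure_strip_ball: "x \<in> closure S \<Longrightarrow> 0 \<le> x$k \<and> x$k \<le> R \<and> norm (x - x0) \<le> L"
    and frontier_strip_ball: "x \<in> frontier S \<Longrightarrow> x$k = 0 \<or> x$k = R \<or> norm (x - x0) = L"
proof -
  show "open S"
    unfolding S_def
    by (intro open_Int open_halfspace_component_gt_cart open_halfspace_component_lt_cart open_ball)
  show "bounded S"
    unfolding S_def by (simp add: bounded_Int)
  have "closure S \<subseteq> {x. x$k \<ge> 0} \<inter> {x. x$k \<le> R} \<inter> cball x0 L"
    unfolding S_def
    by (intro closure_minimal closed_Int closed_halfspace_component_ge_cart closed_halfspace_component_le_cart
        closed_cball) auto
  then show closure_bounds: "0 \<le> x$k \<and> x$k \<le> R \<and> norm (x - x0) \<le> L" if "x \<in> closure S" for x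
    using that by (auto simp: dist_norm norm_minus_commute)
  show "x$k = 0 \<or> x$k = R \<or> norm (x - x0) = L" if "x \<in> frontier S"
  proof -
    from that \<open>open S\<close> have "x \<in> closure S" "x \<notin> S"
      by (auto simp: frontier_def interior_open)
    then have "0 \<le> x$k" "x$k \<le> R" "norm (x - x0) \<le> L" "\<not> (0 < x$k \<and> x$k < R \<and> norm (x - x0) < L)"
      using closure_bounds by (auto simp: S_def dist_norm norm_minus_commute)
    then show ?thesis
      by linarith
  qed
qed

lemma has_derivative_strip_quadratic:
  fixes x0 :: "real^'n::finite"
  shows "((\<lambda>y. a * y$k + b * (norm (y - x0))\<^sup>2 + c * y$k * (R - y$k) + C) has_derivative
      (\<lambda>h. ((a + c * (R - 2 * x$k)) *\<^sub>R axis k 1 + (2 * b) *\<^sub>R (x - x0)) \<bullet> h)) (at x)"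
  unfolding power2_norm_eq_inner
  by (rule has_derivative_eq_rhs,
      auto intro!: derivative_eq_intros bounded_linear_imp_has_derivative[OF bounded_linear_vec_nth]
           simp: fun_eq_iff inner_axis algebra_simps inner_commute)

lemma has_derivative_strip_quadratic_gradient:
  fixes x0 :: "real^'n::finite"
  shows "((\<lambda>y. (a + c * (R - 2 * y$k)) *\<^sub>R axis k 1 + (2 * b) *\<^sub>R (y - x0)) has_derivative
      (\<lambda>h. (\<chi> i j. if i = j then 2 * b + (if i = k then - 2 * c else 0) else 0) *v h)) (at x)"
proof -
  have diagonal_mult: "(\<chi> i j. if i = j then d i else 0) *v h = (\<chi> i. d i * h $ i)" for d and h :: "real^'n"
    by (simp add: vec_eq_iff matrix_vector_mult_def if_distrib[of "\<lambda>a. a * _"] cong: if_cong)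
  show ?thesis
    by (rule has_derivative_eq_rhs,
        auto intro!: derivative_eq_intros bounded_linear_imp_has_derivative[OF bounded_linear_vec_nth]
             simp: fun_eq_iff diagonal_mult vec_eq_iff axis_def algebra_simps)
qed

(* The first three terms are each at least M on one part of the parabolic boundary
   (x_k = R, |x - x0| = L and t = T respectively); the time term 2nM(t - T)/L^2 makes
   the second one caloric, and \<eta>(t - T) makes \<psi> a strict supersolution. *)
definition strip_barrier ::
  "'n::finite \<Rightarrow> real^'n \<Rightarrow> real \<Rightarrow> real \<Rightarrow> real \<Rightarrow> real \<Rightarrow> real \<Rightarrow> real^'n \<Rightarrow> real \<Rightarrow> real" where
  "strip_barrier k x0 T R L M \<eta> x t =
     M * x$k / R + M * ((norm (x - x0))\<^sup>2 + 2 * real CARD('n) * (t - T)) / L\<^sup>2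
     + M * exp (- 4 * (t - T) / R\<^sup>2) * (1 + 4 * x$k * (R - x$k) / R\<^sup>2) + \<eta> * (t - T)"

lemma strip_barrier_strict_supersolution:
  fixes k :: "'n::finite" and x0 :: "real^'n"
  assumes "R > 0" "L > 0" "M \<ge> 0"
  obtains D\<psi> D2\<psi> \<psi>t where
    "\<And>x t. parabolic_derivatives (strip_barrier k x0 T R L M \<eta>) D\<psi> D2\<psi> \<psi>t x t"
    "\<And>x t. \<eta> \<le> \<psi>t x t - (\<Sum>i\<in>UNIV. D2\<psi> x t $ i $ i)"
proof -
  define n where "n = real CARD('n)"
  define E where "E t = exp (- 4 * (t - T) / R\<^sup>2)" for t
  define c where "c t = 4 * M * E t / R\<^sup>2" for t
  define D\<psi> where "D\<psi> x t = (M / R + c t * (R - 2 * x$k)) *\<^sub>R axis k 1 + (2 * (M / L\<^sup>2)) *\<^sub>R (x - x0)"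
    for x t
  define D2\<psi> :: "real^'n \<Rightarrow> real \<Rightarrow> real^'n^'n"
    where "D2\<psi> x t = (\<chi> i j. if i = j then 2 * (M / L\<^sup>2) + (if i = k then - 2 * c t else 0) else 0)"
    for x t
  define \<psi>t where "\<psi>t x t = 2 * n * M / L\<^sup>2 - 4 / R\<^sup>2 * M * E t * (1 + 4 * x$k * (R - x$k) / R\<^sup>2) + \<eta>"
    for x t
  show thesis
  proof (rule that[of D\<psi> D2\<psi> \<psi>t])
    fix x t
    have spatial_form: "(\<lambda>y. strip_barrier k x0 T R L M \<eta> y t) = (\<lambda>y.
        M / R * y$k + M / L\<^sup>2 * (norm (y - x0))\<^sup>2 + c t * y$k * (R - y$k)
        + (2 * n * M / L\<^sup>2 * (t - T) + M * E t + \<eta> * (t - T)))"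
      unfolding fun_eq_iff using \<open>R > 0\<close> \<open>L > 0\<close>
      by (simp add: strip_barrier_def E_def c_def n_def field_simps power2_eq_square)
    have "((\<lambda>y. strip_barrier k x0 T R L M \<eta> y t) has_derivative (\<lambda>h. D\<psi> x t \<bullet> h)) (at x)"
      unfolding spatial_form D\<psi>_def by (rule has_derivative_strip_quadratic)
    moreover have "((\<lambda>y. D\<psi> y t) has_derivative (\<lambda>h. D2\<psi> x t *v h)) (at x)"
      unfolding D\<psi>_def D2\<psi>_def by (rule has_derivative_strip_quadratic_gradient)
    moreover have "((\<lambda>s. strip_barrier k x0 T R L M \<eta> x s) has_real_derivative \<psi>t x t) (at t)"
      unfolding strip_barrier_def \<psi>t_def E_def n_def using \<open>R > 0\<close> \<open>L > 0\<close>
      by (auto intro!: derivative_eq_intros simp: field_simps power2_eq_square)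
    ultimately show "parabolic_derivatives (strip_barrier k x0 T R L M \<eta>) D\<psi> D2\<psi> \<psi>t x t"
      by (simp add: parabolic_derivatives_def)
    have "(\<Sum>i\<in>UNIV. D2\<psi> x t $ i $ i) = 2 * n * M / L\<^sup>2 - 2 * c t"
      by (simp add: D2\<psi>_def n_def sum.distrib)
    moreover have "\<psi>t x t - (2 * n * M / L\<^sup>2 - 2 * c t) = \<eta> + c t * (R - 2 * x$k)\<^sup>2 / R\<^sup>2"
      using \<open>R > 0\<close> by (simp add: \<psi>t_def c_def field_simps power2_eq_square)
    moreover have "0 \<le> c t * (R - 2 * x$k)\<^sup>2 / R\<^sup>2"
      using \<open>M \<ge> 0\<close> by (simp add: c_def E_def)
    ultimately show "\<eta> \<le> \<psi>t x t - (\<Sum>i\<in>UNIV. D2\<psi> x t $ i $ i)"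
      by linarith
  qed
qed

lemma strip_barrier_bounds:
  fixes k :: "'n::finite" and x0 :: "real^'n"
  assumes "0 \<le> x$k" "x$k \<le> R" "T \<le> t" "R > 0" "L > 0" "M \<ge> 0" "\<eta> \<ge> 0"
  shows strip_barrier_nonneg: "0 \<le> strip_barrier k x0 T R L M \<eta> x t"
    and strip_barrier_ge_on_parabolic_boundary:
      "x$k = R \<or> norm (x - x0) = L \<or> t = T \<Longrightarrow> M \<le> strip_barrier k x0 T R L M \<eta> x t"
proof -
  define E where "E = exp (- 4 * (t - T) / R\<^sup>2)"
  have parts: "strip_barrier k x0 T R L M \<eta> x t =
      M * (x$k / R) + M * ((norm (x - x0))\<^sup>2 / L\<^sup>2) + M * 2 * real CARD('n) * (t - T) / L\<^sup>2
      + M * E * (1 + 4 * x$k * (R - x$k) / R\<^sup>2) + \<eta> * (t - T)"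
    unfolding strip_barrier_def E_def[symmetric] using \<open>R > 0\<close> \<open>L > 0\<close>
    by (simp add: field_simps power2_eq_square)
  have nonneg: "0 \<le> M * (x$k / R)" "0 \<le> M * ((norm (x - x0))\<^sup>2 / L\<^sup>2)"
      "0 \<le> M * 2 * real CARD('n) * (t - T) / L\<^sup>2" "0 \<le> \<eta> * (t - T)"
      "0 \<le> M * E * (1 + 4 * x$k * (R - x$k) / R\<^sup>2)"
    using assms by (simp_all add: E_def)
  then show "0 \<le> strip_barrier k x0 T R L M \<eta> x t"
    unfolding parts by linarith
  assume "x$k = R \<or> norm (x - x0) = L \<or> t = T"
  moreover have "x$k = R \<Longrightarrow> M * (x$k / R) = M"
    using \<open>R > 0\<close> by simp
  moreover have "norm (x - x0) = L \<Longrightarrow> M * ((norm (x - x0))\<^sup>2 / L\<^sup>2) = M"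
    using \<open>L > 0\<close> by simp
  moreover have "t = T \<Longrightarrow> M \<le> M * E * (1 + 4 * x$k * (R - x$k) / R\<^sup>2)"
    using assms mult_left_mono[of 1 "1 + 4 * x$k * (R - x$k) / R\<^sup>2" M] by (simp add: E_def)
  ultimately show "M \<le> strip_barrier k x0 T R L M \<eta> x t"
    unfolding parts using nonneg by linarith
qed

lemma strip_barrier_at_centre_le:
  fixes k :: "'n::finite" and x0 :: "real^'n"
  assumes "0 \<le> x0$k" "x0$k \<le> R" "R > 0" "M \<ge> 0"
  shows "strip_barrier k x0 T R L M \<eta> x0 t0 \<le> M * x0$k / R + 2 * real CARD('n) * M * (t0 - T) / L\<^sup>2
      + 2 * M * exp (- 4 * (t0 - T) / R\<^sup>2) + \<eta> * (t0 - T)"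
proof -
  have "4 * x0$k * (R - x0$k) \<le> R\<^sup>2"
    using sum_power2_ge_zero[of "R - 2 * x0$k" 0] by (simp add: power2_eq_square algebra_simps)
  then have "1 + 4 * x0$k * (R - x0$k) / R\<^sup>2 \<le> 2"
    using \<open>R > 0\<close> by (simp add: field_simps)
  then have "M * exp (- 4 * (t0 - T) / R\<^sup>2) * (1 + 4 * x0$k * (R - x0$k) / R\<^sup>2)
      \<le> M * exp (- 4 * (t0 - T) / R\<^sup>2) * 2"
    using \<open>M \<ge> 0\<close> by (intro mult_left_mono) auto
  then show ?thesis
    by (simp add: strip_barrier_def algebra_simps)
qed

lemma strip_barrier_small_at_centre:
  fixes k :: "'n::finite" and x0 :: "real^'n"
  assumes "\<delta> > 0" "M \<ge> 0" "R > 0" "0 < x0$k" "x0$k \<le> R" "M \<le> \<delta> / (4 * (x0$k + 1)) * R"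
  obtains T L \<eta> where "T < t0" "L > 0" "\<eta> > 0" "strip_barrier k x0 T R L M \<eta> x0 t0 < \<delta>"
proof -
  define s where "s = 8 * M / \<delta> + 1"
  define \<tau> where "\<tau> = R\<^sup>2 / 4 * s"
  define L where "L = 1 + 8 * real CARD('n) * M * \<tau> / \<delta>"
  define \<eta> where "\<eta> = \<delta> / (8 * \<tau>)"
  have "s \<ge> 1"
    using assms by (simp add: s_def)
  then have "\<tau> > 0"
    using \<open>R > 0\<close> by (simp add: \<tau>_def)
  then have "L \<ge> 1"
    using assms by (simp add: L_def)
  have "M * x0$k \<le> \<delta> / (4 * (x0$k + 1)) * R * x0$k"
    using assms(6) less_imp_le[OF assms(4)] by (rule mult_right_mono)
  also have "\<dots> \<le> \<delta> / 4 * R"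
    using assms by (simp add: field_simps)
  finally have "M * x0$k / R \<le> \<delta> / 4"
    using \<open>R > 0\<close> by (simp add: field_simps)
  moreover have "2 * real CARD('n) * M * \<tau> / L\<^sup>2 \<le> 2 * real CARD('n) * M * \<tau> / L"
    using \<open>L \<ge> 1\<close> \<open>\<tau> > 0\<close> assms by (intro divide_left_mono) (auto simp: power2_eq_square)
  moreover have "2 * real CARD('n) * M * \<tau> / L \<le> \<delta> / 4"
    using \<open>L \<ge> 1\<close> \<open>\<delta> > 0\<close> by (simp add: L_def field_simps)
  moreover have "exp (- s) \<le> 1 / (1 + s)"
    using exp_ge_add_one_self[of s] \<open>s \<ge> 1\<close> by (simp add: exp_minus field_simps)
  then have "2 * M * exp (- s) \<le> 2 * M * (1 / (1 + s))"
    using \<open>M \<ge> 0\<close> by (intro mult_left_mono) auto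
  moreover have "2 * M * (1 / (1 + s)) \<le> \<delta> / 4"
    using assms by (simp add: s_def field_simps)
  moreover have "- 4 * \<tau> / R\<^sup>2 = - s" "\<eta> * \<tau> = \<delta> / 8"
    using \<open>R > 0\<close> \<open>s \<ge> 1\<close> by (simp_all add: \<tau>_def \<eta>_def)
  ultimately have "strip_barrier k x0 (t0 - \<tau>) R L M \<eta> x0 t0 < \<delta>"
    using strip_barrier_at_centre_le[of x0 k R M "t0 - \<tau>" L \<eta> t0] assms by simp
  moreover have "t0 - \<tau> < t0" "L > 0" "\<eta> > 0"
    using \<open>\<tau> > 0\<close> \<open>L \<ge> 1\<close> \<open>\<delta> > 0\<close> by (simp_all add: \<eta>_def)
  ultimately show thesis
    using that by blast
qed

lemma neg_solution_le_strip_barrier_on_parabolic_boundary: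
  fixes u :: "real^'n::finite \<Rightarrow> real \<Rightarrow> real" and k :: 'n
  assumes u_zero: "\<forall>x t. x $ k = 0 \<and> t < 0 \<longrightarrow> u x t = 0"
    and bound: "\<And>x t. 0 < x$k \<Longrightarrow> x$k \<le> R \<Longrightarrow> t \<le> t0 \<Longrightarrow> - u x t \<le> M"
    and "R > 0" "L > 0" "M \<ge> 0" "\<eta> \<ge> 0" "t0 < 0"
    and x: "0 \<le> x$k" "x$k \<le> R" "T \<le> t" "t \<le> t0"
    and boundary: "x$k = 0 \<or> x$k = R \<or> norm (x - x0) = L \<or> t = T"
  shows "- u x t \<le> strip_barrier k x0 T R L M \<eta> x t"
proof (cases "x$k = 0")
  case True
  then have "u x t = 0"
    using u_zero \<open>t \<le> t0\<close> \<open>t0 < 0\<close> by simp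
  moreover have "0 \<le> strip_barrier k x0 T R L M \<eta> x t"
    using x assms(3-6) by (intro strip_barrier_nonneg) auto
  ultimately show ?thesis
    by simp
next
  case False
  then have "- u x t \<le> M"
    using bound x by simp
  also have "M \<le> strip_barrier k x0 T R L M \<eta> x t"
    using False boundary x assms(3-6) by (intro strip_barrier_ge_on_parabolic_boundary) auto
  finally show ?thesis .
qed

lemma ancient_solution_neg_heat_subsolution:
  assumes "ancient_half_space_solution p k u"
  obtains Dv D2v vt where
    "\<And>x t. (x, t) \<in> halfQ k \<Longrightarrow>
      parabolic_derivatives (\<lambda>x t. - u x t) Dv D2v vt x t \<and> vt x t \<le> (\<Sum>i\<in>UNIV. D2v x t $ i $ i)"
proof -
  obtain g H ut where
    u_deriv: "\<forall>(x, t)\<in>halfQ k. parabolic_derivatives u g H ut x t"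
    and pde: "\<forall>(x, t)\<in>halfQ k. ut x t - (\<Sum>i\<in>UNIV. H x t $ i $ i) = norm (g x t) powr p"
    using assms unfolding ancient_half_space_solution_def parabolic_derivatives_def by blast
  show thesis
  proof (rule that[of "\<lambda>x t. - g x t" "\<lambda>x t. - H x t" "\<lambda>x t. - ut x t"])
    fix x t assume "(x, t) \<in> halfQ k"
    then have deriv: "parabolic_derivatives u g H ut x t"
      and "ut x t - (\<Sum>i\<in>UNIV. H x t $ i $ i) = norm (g x t) powr p"
      using u_deriv pde by auto
    then have "(\<Sum>i\<in>UNIV. H x t $ i $ i) \<le> ut x t"
      using powr_ge_zero[of "norm (g x t)" p] by linarith
    with deriv show "parabolic_derivatives (\<lambda>x t. - u x t) (\<lambda>x t. - g x t) (\<lambda>x t. - H x t) (\<lambda>x t. - ut x t) x t \<and>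
        - ut x t \<le> (\<Sum>i\<in>UNIV. (- H x t) $ i $ i)"
      by (simp add: parabolic_derivatives_minus sum_negf)
  qed
qed

lemma neg_solution_le_strip_barrier:
  fixes u :: "real^'n::finite \<Rightarrow> real \<Rightarrow> real" and k :: 'n
  assumes sol: "ancient_half_space_solution p k u"
    and bound: "\<And>x t. 0 < x$k \<Longrightarrow> x$k \<le> R \<Longrightarrow> t \<le> t0 \<Longrightarrow> - u x t \<le> M"
    and "R > 0" "L > 0" "M \<ge> 0" "\<eta> > 0" "T < t0" "t0 < 0" "0 < x0$k" "x0$k < R"
  shows "- u x0 t0 \<le> strip_barrier k x0 T R L M \<eta> x0 t0"
proof -
  let ?\<Omega> = "{x. x$k > 0} \<inter> {x. x$k < R} \<inter> ball x0 L"
  have u_cont: "continuous_on (halfQ_closure k) (\<lambda>(x, t). u x t)"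
    and u_zero: "\<forall>x t. x $ k = 0 \<and> t < 0 \<longrightarrow> u x t = 0"
    using sol unfolding ancient_half_space_solution_def by blast+
  obtain Dv D2v vt where sub: "\<And>x t. (x, t) \<in> halfQ k \<Longrightarrow>
      parabolic_derivatives (\<lambda>x t. - u x t) Dv D2v vt x t \<and> vt x t \<le> (\<Sum>i\<in>UNIV. D2v x t $ i $ i)"
    by (fact ancient_solution_neg_heat_subsolution[OF sol])
  obtain D\<psi> D2\<psi> \<psi>t where \<psi>_deriv: "\<And>x t. parabolic_derivatives (strip_barrier k x0 T R L M \<eta>) D\<psi> D2\<psi> \<psi>t x t"
    and \<psi>_super: "\<And>x t. \<eta> \<le> \<psi>t x t - (\<Sum>i\<in>UNIV. D2\<psi> x t $ i $ i)"
    by (fact strip_barrier_strict_supersolution[of R L M k x0 T \<eta>, OF \<open>R > 0\<close> \<open>L > 0\<close> \<open>M \<ge> 0\<close>])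
  have boundary: "- u x t \<le> strip_barrier k x0 T R L M \<eta> x t"
    if "x \<in> closure ?\<Omega>" "T \<le> t" "t \<le> t0" "x$k = 0 \<or> x$k = R \<or> norm (x - x0) = L \<or> t = T" for x t
    using neg_solution_le_strip_barrier_on_parabolic_boundary[OF u_zero bound \<open>R > 0\<close> \<open>L > 0\<close> \<open>M \<ge> 0\<close>
        less_imp_le[OF \<open>\<eta> > 0\<close>] \<open>t0 < 0\<close> _ _ that(2-4)] closure_strip_ball[OF that(1)]
    by blast
  have u_cont': "continuous_on (closure ?\<Omega> \<times> {T..t0}) (\<lambda>(x, t). u x t)"
  proof (rule continuous_on_subset[OF u_cont], clarify)
    fix x t assume "x \<in> closure ?\<Omega>" "t \<in> {T..t0}"
    with closure_strip_ball[OF this(1)] \<open>t0 < 0\<close> show "(x, t) \<in> halfQ_closure k"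
      by (simp add: halfQ_closure_def)
  qed
  have "x0 \<in> closure ?\<Omega>"
    using \<open>0 < x0$k\<close> \<open>x0$k < R\<close> \<open>L > 0\<close>
    by (intro closure_subset[THEN subsetD] IntI CollectI centre_in_ball[THEN iffD2])
  show ?thesis
  proof (rule heat_comparison[where \<Omega> = ?\<Omega> and v = "\<lambda>x t. - u x t"
        and \<psi> = "strip_barrier k x0 T R L M \<eta>", OF open_strip_ball bounded_strip_ball])
    show "continuous_on (closure ?\<Omega> \<times> {T..t0}) (\<lambda>(x, t). - u x t)"
      using u_cont' unfolding case_prod_unfold by (intro continuous_intros)
    show "continuous_on (closure ?\<Omega> \<times> {T..t0}) (\<lambda>(x, t). strip_barrier k x0 T R L M \<eta> x t)"
      unfolding strip_barrier_def case_prod_unfold using \<open>R > 0\<close> \<open>L > 0\<close>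
      by (intro continuous_intros) auto
  next
    fix x t assume "x \<in> ?\<Omega>" "T < t" "t \<le> t0"
    then have "(x, t) \<in> halfQ k"
      using \<open>t0 < 0\<close> by (simp add: halfQ_def)
    then show "parabolic_derivatives (\<lambda>x t. - u x t) Dv D2v vt x t \<and> vt x t \<le> (\<Sum>i\<in>UNIV. D2v x t $ i $ i)"
      by (rule sub)
    show "parabolic_derivatives (strip_barrier k x0 T R L M \<eta>) D\<psi> D2\<psi> \<psi>t x t \<and>
        (\<Sum>i\<in>UNIV. D2\<psi> x t $ i $ i) < \<psi>t x t"
      using \<psi>_deriv[of x t] \<psi>_super[of x t] \<open>\<eta> > 0\<close> by simp
  next
    fix x t assume "x \<in> frontier ?\<Omega>" "T \<le> t" "t \<le> t0"
    moreover from this(1) have "x \<in> closure ?\<Omega>"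
      by (simp add: frontier_def)
    ultimately show "- u x t \<le> strip_barrier k x0 T R L M \<eta> x t"
      using boundary frontier_strip_ball[OF \<open>x \<in> frontier ?\<Omega>\<close>] by blast
  next
    fix x assume "x \<in> closure ?\<Omega>"
    then show "- u x T \<le> strip_barrier k x0 T R L M \<eta> x T"
      using boundary \<open>T < t0\<close> by simp
  qed (use \<open>x0 \<in> closure ?\<Omega>\<close> \<open>T < t0\<close> in simp_all)
qed

lemma strip_inf_sublinear_bound:
  fixes u :: "real^'n::finite \<Rightarrow> real \<Rightarrow> real" and k :: 'n
  assumes growth: "\<forall>\<epsilon>>0.
           (\<forall>\<^sub>F R in at_top. bdd_below ((\<lambda>(x, t). u x t) ` strip_set k R \<epsilon>)) \<and>
           ((\<lambda>R. Inf ((\<lambda>(x, t). u x t) ` strip_set k R \<epsilon>) / R) \<longlongrightarrow> 0) at_top"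
    and "t0 < 0" "c > 0"
  obtains R M where "R > R\<^sub>0" "M \<ge> 0" "M \<le> c * R"
    "\<And>x t. 0 < x$k \<Longrightarrow> x$k \<le> R \<Longrightarrow> t \<le> t0 \<Longrightarrow> - u x t \<le> M"
proof -
  let ?S = "\<lambda>R. (\<lambda>(x, t). u x t) ` strip_set k R (- t0)"
  have bdd: "\<forall>\<^sub>F R in at_top. bdd_below (?S R)" and lim: "((\<lambda>R. Inf (?S R) / R) \<longlongrightarrow> 0) at_top"
    using spec[OF growth, of "- t0"] \<open>t0 < 0\<close> by simp_all
  have "\<forall>\<^sub>F R in at_top. \<bar>Inf (?S R) / R\<bar> < c / 2"
    using tendstoD[OF lim, of "c / 2"] \<open>c > 0\<close> by (simp add: dist_real_def)
  then have "\<forall>\<^sub>F R in at_top. bdd_below (?S R) \<and> \<bar>Inf (?S R) / R\<bar> < c / 2 \<and> R > 2 * \<bar>R\<^sub>0\<bar> + 1"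
    using bdd eventually_gt_at_top eventually_conj by blast
  then obtain R' where R': "bdd_below (?S R')" "\<bar>Inf (?S R') / R'\<bar> < c / 2" "R' > 2 * \<bar>R\<^sub>0\<bar> + 1"
    by (auto simp: eventually_at_top_linorder)
  show thesis
  proof (rule that[of "R' / 2" "\<bar>Inf (?S R')\<bar>"])
    show "R' / 2 > R\<^sub>0" "\<bar>Inf (?S R')\<bar> \<ge> 0"
      using R'(3) by auto
    show "\<bar>Inf (?S R')\<bar> \<le> c * (R' / 2)"
      using R'(2,3) by (simp add: abs_divide field_simps)
    fix x t assume "0 < x$k" "x$k \<le> R' / 2" "t \<le> t0"
    then have "(x, t) \<in> strip_set k R' (- t0)"
      using R'(3) by (simp add: strip_set_def)
    then have "u x t \<in> ?S R'"
      by (rule rev_image_eqI) simp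
    then have "Inf (?S R') \<le> u x t"
      using R'(1) by (rule cInf_lower)
    then show "- u x t \<le> \<bar>Inf (?S R')\<bar>"
      by linarith
  qed
qed

theorem proposition5p5:
  fixes p :: real and k :: "'n::finite" and u :: "real^'n \<Rightarrow> real \<Rightarrow> real"
  assumes "1 < p" "p < 2"
    and "ancient_half_space_solution p k u"
    and "\<forall>\<epsilon>>0.
           (\<forall>\<^sub>F R in at_top. bdd_below ((\<lambda>(x,t). u x t) ` strip_set k R \<epsilon>)) \<and>
           ((\<lambda>R. Inf ((\<lambda>(x,t). u x t) ` strip_set k R \<epsilon>) / R) \<longlongrightarrow> 0) at_top"
  shows "\<forall>x t. 0 < x $ k \<and> t < 0 \<longrightarrow> u x t \<ge> 0"
proof (intro allI impI)
  fix x0 :: "real^'n" and t0 :: real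
  assume "0 < x0 $ k \<and> t0 < 0"
  then have "0 < x0$k" "t0 < 0"
    by auto
  show "u x0 t0 \<ge> 0"
  proof (rule ccontr)
    define \<delta> where "\<delta> = - u x0 t0"
    assume "\<not> u x0 t0 \<ge> 0"
    then have "\<delta> > 0"
      by (simp add: \<delta>_def)
    have "\<delta> / (4 * (x0$k + 1)) > 0"
      using \<open>\<delta> > 0\<close> \<open>0 < x0$k\<close> by simp
    obtain R M where "R > x0$k" "M \<ge> 0" "M \<le> \<delta> / (4 * (x0$k + 1)) * R"
      and bound: "\<And>x t. 0 < x$k \<Longrightarrow> x$k \<le> R \<Longrightarrow> t \<le> t0 \<Longrightarrow> - u x t \<le> M"
      by (fact strip_inf_sublinear_bound[OF assms(4) \<open>t0 < 0\<close> \<open>\<delta> / (4 * (x0$k + 1)) > 0\<close>])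
    then have "R > 0" "x0$k \<le> R"
      using \<open>0 < x0$k\<close> by linarith+
    obtain T L \<eta> where "T < t0" "L > 0" "\<eta> > 0" and small: "strip_barrier k x0 T R L M \<eta> x0 t0 < \<delta>"
      by (fact strip_barrier_small_at_centre[OF \<open>\<delta> > 0\<close> \<open>M \<ge> 0\<close> \<open>R > 0\<close> \<open>0 < x0$k\<close> \<open>x0$k \<le> R\<close>
            \<open>M \<le> \<delta> / (4 * (x0$k + 1)) * R\<close>])
    have "- u x0 t0 \<le> strip_barrier k x0 T R L M \<eta> x0 t0"
      using \<open>R > 0\<close> \<open>L > 0\<close> \<open>M \<ge> 0\<close> \<open>\<eta> > 0\<close> \<open>T < t0\<close> \<open>t0 < 0\<close> \<open>0 < x0$k\<close> \<open>R > x0$k\<close>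
      by (intro neg_solution_le_strip_barrier[OF assms(3) bound]) simp_all
    with small show False
      by (simp add: \<delta>_def)
  qed
qed

end
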